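(* For every $k\in\mathbb N$, $\psi_k(\mathrm{Rist}_{G_3}(\widehat k))=H_k\times\cdots\times H_k$ ($3^k$ factors). In particular, $\psi_k(\mathrm{Rist}_{G_3}(1\cdots1))=H_k\times\{e\}\times\cdots\times\{e\}$ for the vertex $1\cdots1$ of length $k$.
   Context: Let $X=\{1,2,3\}$ and $T$ the ternary rooted tree with vertex set $X^*$. $\mathrm{Aut}(T)$ is the group of root-preserving automorphisms with product left-to-right: $(gh)(u)=h(g(u))$. Sections $g|_u$ are defined by $g(uv)=g(u)\,g|_u(v)$; we write $g=(g|_1,g|_2,g|_3)\lambda_g$; $e$ is the identity. $G_3=\langle A\rangle\le\mathrm{Aut}(T)$, $A=\{a,b,c\}$, with $a=(a,b,e)(1\,2)$, $b=(e,b,c)(2\,3)$, $c=(a,e,c)(3\,1)$. For a word $w$ over $A\cup A^{-1}$, $|w|_A$ is its total exponent sum (well defined on elements of $G_3$ since relators have zero exponent sums). $H_k=\{g\in G_3:|g|_A\equiv0\pmod{2^{k+1}}\}$. $\mathrm{St}_{G_3}(\widehat k)$ is the subgroup fixing every vertex of level $k$, and $\psi_k:\mathrm{St}_{G_3}(\widehat k)\to G_3^{3^k}$, $g\mapsto (g|_u)_{u\in X^k}$ (lexicographic order of $X^k$) is the injective homomorphism. For a vertex $u$, $\mathrm{Rist}_{G_3}(u)$ is the subgroup of elements acting trivially on all vertices outside the subtree rooted at $u$; $\mathrm{Rist}_{G_3}(\widehat k)$ is the subgroup generated by $\bigcup_{|u|=k}\mathrm{Rist}_{G_3}(u)$. 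*)

theory Defs
  imports Main "HOL-Library.FuncSet"
begin

datatype letter = X1 | X2 | X3

type_synonym vertex = "letter list"
type_synonym aut = "vertex \<Rightarrow> vertex"

text \<open>Generators: a = (a,b,e)(1 2), b = (e,b,c)(2 3), c = (a,e,c)(3 1),
  with g(x v) = lambda_g(x) g|_x(v).\<close>
fun aa :: aut and bb :: aut and cc :: aut where
  "aa [] = []"
| "aa (X1 # w) = X2 # aa w"
| "aa (X2 # w) = X1 # bb w"
| "aa (X3 # w) = X3 # w"
| "bb [] = []"
| "bb (X1 # w) = X1 # w"
| "bb (X2 # w) = X3 # bb w"
| "bb (X3 # w) = X2 # cc w"
| "cc [] = []"
| "cc (X1 # w) = X3 # aa w"
| "cc (X2 # w) = X2 # w"
| "cc (X3 # w) = X1 # cc w"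

datatype gen = Ga | Gb | Gc

fun genf :: "gen \<Rightarrow> aut" where
  "genf Ga = aa" | "genf Gb = bb" | "genf Gc = cc"

fun letf :: "gen \<times> bool \<Rightarrow> aut" where
  "letf (s, False) = genf s"
| "letf (s, True) = inv (genf s)"

text \<open>Product is left-to-right: (g h)(u) = h(g(u)).\<close>
fun evalw :: "(gen \<times> bool) list \<Rightarrow> aut" where
  "evalw [] = id"
| "evalw (x # w) = evalw w \<circ> letf x"

fun expsum :: "(gen \<times> bool) list \<Rightarrow> int" where
  "expsum [] = 0"
| "expsum ((s, inverted) # w) = (if inverted then -1 else 1) + expsum w"

definition G3 :: "aut set" where
  "G3 = range evalw"

definition H :: "nat \<Rightarrow> aut set" where
  "H k = {g \<in> G3. \<exists>w. evalw w = g \<and> (2::int) ^ (k + 1) dvd expsum w}"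

text \<open>Sections: g(u v) = g(u) g|_u(v).\<close>
definition sect :: "aut \<Rightarrow> vertex \<Rightarrow> aut" where
  "sect g u = (\<lambda>v. drop (length u) (g (u @ v)))"

definition level :: "nat \<Rightarrow> vertex set" where
  "level k = {u. length u = k}"

definition St :: "nat \<Rightarrow> aut set" where
  "St k = {g \<in> G3. \<forall>u \<in> level k. g u = u}"

text \<open>psi_k(g) = (g|_u)_{u \<in> X^k}, as an extensional tuple indexed by level k.\<close>
definition psi :: "nat \<Rightarrow> aut \<Rightarrow> (vertex \<Rightarrow> aut)" where
  "psi k g = restrict (\<lambda>u. sect g u) (level k)"

definition Rist_v :: "vertex \<Rightarrow> aut set" where
  "Rist_v u = {g \<in> G3. \<forall>v. \<not> (\<exists>w. v = u @ w) \<longrightarrow> g v = v}"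

inductive_set gen_closure :: "aut set \<Rightarrow> aut set" for S where
  gc_id: "id \<in> gen_closure S"
| gc_gen: "g \<in> S \<Longrightarrow> g \<in> gen_closure S"
| gc_mult: "g \<in> gen_closure S \<Longrightarrow> h \<in> gen_closure S \<Longrightarrow> h \<circ> g \<in> gen_closure S"
| gc_inv: "g \<in> gen_closure S \<Longrightarrow> inv g \<in> gen_closure S"

definition Rist_level :: "nat \<Rightarrow> aut set" where
  "Rist_level k = gen_closure (\<Union>u \<in> level k. Rist_v u)"

end

theory Submission
  imports Defs
begin

text \<open>
  The exponent sum is well defined on G3: the first-level sections of a relator are relators whose
  lengths and exponent sums add up to twice those of the relator, and a counting argument by
  induction on the length forces the exponent sum of a relator to vanish.

  Passing to first-level sections doubles the total exponent sum. An element of Rist(u), with u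
  of length k, fixes the first level (so its exponent sum is even) and has trivial sections at the
  other vertices of level k, hence its section at u lies in H_k. Conversely, the elements whose
  exponent sum is divisible by 4 form a subgroup of index 4 all of whose Schreier generators are
  realised, by explicit words, as elements of G3 acting only below the vertex 1; conjugation moves
  them below 2 and 3. Iterating k times realises every element of H_k as the section at u of an
  element of Rist(u). Both directions pass to the group generated by the rigid stabilisers,
  since sections at level k are multiplicative on the level stabiliser.
\<close>

fun ainv :: aut and binv :: aut and cinv :: aut where
  "ainv [] = []"
| "ainv (X1 # w) = X2 # binv w"
| "ainv (X2 # w) = X1 # ainv w"
| "ainv (X3 # w) = X3 # w"
| "binv [] = []"
| "binv (X1 # w) = X1 # w"
| "binv (X2 # w) = X3 # cinv w"
| "binv (X3 # w) = X2 # binv w"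
| "cinv [] = []"
| "cinv (X1 # w) = X3 # cinv w"
| "cinv (X2 # w) = X2 # w"
| "cinv (X3 # w) = X1 # ainv w"

lemma gen_inv_right: "aa (ainv w) = w \<and> bb (binv w) = w \<and> cc (cinv w) = w"
proof (induction w)
  case (Cons x w) then show ?case by (cases x) auto
qed simp

lemma gen_inv_left: "ainv (aa w) = w \<and> binv (bb w) = w \<and> cinv (cc w) = w"
proof (induction w)
  case (Cons x w) then show ?case by (cases x) auto
qed simp

lemma inv_aa: "inv aa = ainv" by (rule inv_equality) (simp_all add: gen_inv_left gen_inv_right)
lemma inv_bb: "inv bb = binv" by (rule inv_equality) (simp_all add: gen_inv_left gen_inv_right)
lemma inv_cc: "inv cc = cinv" by (rule inv_equality) (simp_all add: gen_inv_left gen_inv_right)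

type_synonym word = "(gen \<times> bool) list"

fun gen_perm :: "gen \<Rightarrow> letter \<Rightarrow> letter" where
  "gen_perm Ga X1 = X2" | "gen_perm Ga X2 = X1" | "gen_perm Ga X3 = X3"
| "gen_perm Gb X1 = X1" | "gen_perm Gb X2 = X3" | "gen_perm Gb X3 = X2"
| "gen_perm Gc X1 = X3" | "gen_perm Gc X2 = X2" | "gen_perm Gc X3 = X1"

fun letter_gen :: "letter \<Rightarrow> gen" where
  "letter_gen X1 = Ga" | "letter_gen X2 = Gb" | "letter_gen X3 = Gc"

text \<open>A generator's section at a letter it moves is the generator named after that letter
  (a = (a,b,e), b = (e,b,c), c = (a,e,c)); at its fixed letter the section is trivial.\<close>
fun lit_sect :: "gen \<times> bool \<Rightarrow> letter \<Rightarrow> word" where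
  "lit_sect (s, False) x = (if gen_perm s x = x then [] else [(letter_gen x, False)])"
| "lit_sect (s, True) x = (if gen_perm s x = x then [] else [(letter_gen (gen_perm s x), True)])"

lemma letf_Cons: "letf l (x # v) = gen_perm (fst l) x # evalw (lit_sect l x) v"
proof -
  obtain s b where l: "l = (s, b)" by (cases l)
  show ?thesis unfolding l
    by (cases s; cases x; cases b) (simp_all add: inv_aa inv_bb inv_cc)
qed

lemma letf_Nil: "letf l [] = []"
  by (cases l; cases "fst l"; cases "snd l") (auto simp: inv_aa inv_bb inv_cc)

fun word_root :: "word \<Rightarrow> letter \<Rightarrow> letter" where
  "word_root [] x = x"
| "word_root (l # w) x = word_root w (gen_perm (fst l) x)"

fun word_sect :: "word \<Rightarrow> letter \<Rightarrow> word" where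
  "word_sect [] x = []"
| "word_sect (l # w) x = lit_sect l x @ word_sect w (gen_perm (fst l) x)"

lemma evalw_append: "evalw (u @ v) = evalw v \<circ> evalw u"
  by (induction u) auto

lemma evalw_Nil: "evalw w [] = []"
  by (induction w) (auto simp: letf_Nil)

lemma evalw_Cons: "evalw w (x # v) = word_root w x # evalw (word_sect w x) v"
  by (induction w arbitrary: x v) (auto simp: letf_Cons evalw_append)

definition lit_inv :: "gen \<times> bool \<Rightarrow> gen \<times> bool" where
  "lit_inv l = (fst l, \<not> snd l)"

definition word_inv :: "word \<Rightarrow> word" where
  "word_inv w = rev (map lit_inv w)"

lemma letf_lit_inv_left: "letf (lit_inv l) \<circ> letf l = id"
  and letf_lit_inv_right: "letf l \<circ> letf (lit_inv l) = id"
  by (cases l; cases "fst l"; cases "snd l";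
      auto simp: lit_inv_def fun_eq_iff inv_aa inv_bb inv_cc gen_inv_left gen_inv_right)+

lemma word_inv_Cons: "word_inv (l # w) = word_inv w @ [lit_inv l]"
  by (simp add: word_inv_def)

lemma evalw_word_inv_left: "evalw (word_inv w) \<circ> evalw w = id"
proof (induction w)
  case (Cons l w)
  have "evalw (word_inv (l # w)) \<circ> evalw (l # w)
      = letf (lit_inv l) \<circ> (evalw (word_inv w) \<circ> evalw w) \<circ> letf l"
    by (simp add: word_inv_Cons evalw_append comp_assoc)
  also have "\<dots> = id" by (simp only: Cons.IH comp_id letf_lit_inv_left)
  finally show ?case .
qed (simp add: word_inv_def)

lemma evalw_word_inv_right: "evalw w \<circ> evalw (word_inv w) = id"
proof (induction w)
  case (Cons l w)
  have "evalw (l # w) \<circ> evalw (word_inv (l # w))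
      = evalw w \<circ> (letf l \<circ> letf (lit_inv l)) \<circ> evalw (word_inv w)"
    by (simp add: word_inv_Cons evalw_append comp_assoc)
  also have "\<dots> = id" by (simp only: Cons.IH comp_id letf_lit_inv_right)
  finally show ?case .
qed (simp add: word_inv_def)

lemma inv_evalw: "inv (evalw w) = evalw (word_inv w)"
  by (rule inv_equality)
    (simp_all add: pointfree_idE evalw_word_inv_left evalw_word_inv_right)

lemma expsum_Cons: "expsum (l # w) = expsum [l] + expsum w"
  by (cases l) simp

lemma expsum_append: "expsum (u @ v) = expsum u + expsum v"
  by (induction u rule: expsum.induct) auto

lemma expsum_word_inv: "expsum (word_inv w) = - expsum w"
  by (induction w) (auto simp: word_inv_def expsum_append lit_inv_def)

lemma UNIV_letter: "(UNIV :: letter set) = {X1, X2, X3}"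
  using letter.exhaust by auto

instance letter :: finite
  by standard (simp add: UNIV_letter)

lemma sum_UNIV_letter: "(\<Sum>x\<in>UNIV. f x) = f X1 + f X2 + (f X3 :: 'a :: comm_monoid_add)"
  by (simp add: UNIV_letter add.assoc)

lemma sum_gen_perm: "(\<Sum>x\<in>UNIV. f (gen_perm s x)) = (\<Sum>x\<in>UNIV. f x :: 'a :: comm_monoid_add)"
  by (cases s) (simp_all add: sum_UNIV_letter ac_simps)

lemma sum_length_word_sect: "(\<Sum>x\<in>UNIV. length (word_sect w x)) = 2 * length w"
proof (induction w)
  case (Cons l w)
  have "(\<Sum>x\<in>UNIV. length (lit_sect l x)) = 2"
    by (cases l; cases "fst l"; cases "snd l") (auto simp: sum_UNIV_letter)
  with Cons.IH show ?case
    by (simp add: sum.distrib sum_gen_perm[of "\<lambda>y. length (word_sect w y)"])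
qed simp

lemma sum_expsum_word_sect: "(\<Sum>x\<in>UNIV. expsum (word_sect w x)) = 2 * expsum w"
proof (induction w)
  case (Cons l w)
  have "(\<Sum>x\<in>UNIV. expsum (lit_sect l x)) = 2 * expsum [l]"
    by (cases l; cases "fst l"; cases "snd l") (auto simp: sum_UNIV_letter)
  with Cons.IH show ?case
    by (simp add: sum.distrib expsum_append sum_gen_perm[of "\<lambda>y. expsum (word_sect w y)"]
        expsum_Cons[of l w])
qed simp

lemma length_word_sect_le: "length (word_sect w x) \<le> length w"
proof (induction w arbitrary: x)
  case (Cons l w)
  have "length (lit_sect l x) \<le> 1" by (cases l; cases "snd l") auto
  with Cons.IH[of "gen_perm (fst l) x"] show ?case by simp
qed simp

lemma expsum_word_sect_full:
  "length (word_sect w x) = length w \<Longrightarrow> expsum (word_sect w x) = expsum w"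
proof (induction w arbitrary: x)
  case (Cons l w)
  have "length (lit_sect l x) \<le> 1" by (cases l; cases "snd l") auto
  with Cons.prems length_word_sect_le[of w "gen_perm (fst l) x"]
  have "length (lit_sect l x) = 1" and "length (word_sect w (gen_perm (fst l) x)) = length w"
    by auto
  moreover from this(1) have "expsum (lit_sect l x) = expsum [l]"
    by (cases l; cases "snd l") (auto split: if_splits)
  ultimately show ?case
    using Cons.IH by (simp add: expsum_append expsum_Cons[of l w])
qed simp

lemma relator_root: "evalw w = id \<Longrightarrow> word_root w x = x"
  using evalw_Cons[of w x "[]"] by simp

lemma relator_word_sect: "evalw w = id \<Longrightarrow> evalw (word_sect w x) = id"
  using evalw_Cons[of w x] by (auto simp: fun_eq_iff)

definition one_gen :: "word \<Rightarrow> bool" where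
  "one_gen w \<longleftrightarrow> (\<exists>s. \<forall>l\<in>set w. fst l = s)"

lemma fixes_if_word_sect_Nil: "word_sect w x = [] \<Longrightarrow> \<forall>l\<in>set w. gen_perm (fst l) x = x"
proof (induction w arbitrary: x)
  case (Cons l w)
  then have "lit_sect l x = []" and "word_sect w (gen_perm (fst l) x) = []" by auto
  moreover from this(1) have "gen_perm (fst l) x = x"
    by (cases l; cases "snd l") (auto split: if_splits)
  ultimately show ?case using Cons.IH by auto
qed simp

lemma one_gen_if_word_sect_Nil: "word_sect w x = [] \<Longrightarrow> one_gen w"
proof -
  have unique: "gen_perm s x = x \<Longrightarrow> gen_perm t x = x \<Longrightarrow> s = t" for s t
    by (cases s; cases t; cases x) auto
  assume "word_sect w x = []"
  then show ?thesis
    using fixes_if_word_sect_Nil unique unfolding one_gen_def by blast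
qed

lemma expsum_relator_not_one_gen:
  assumes IH: "\<And>w'. length w' < length w \<Longrightarrow> evalw w' = id \<Longrightarrow> expsum w' = 0"
    and rel: "evalw w = id" and not_one: "\<not> one_gen w"
  shows "expsum w = 0"
proof -
  txt \<open>The sections have lengths in [1, length w] summing to 2 * length w, so at most one of
    them has full length (and then the same exponent sum as w); the others are shorter relators.\<close>
  have E: "expsum (word_sect w x) = (if length (word_sect w x) = length w then expsum w else 0)"
    for x
    using expsum_word_sect_full length_word_sect_le[of w x] IH relator_word_sect[OF rel]
    by (cases "length (word_sect w x) = length w") auto
  have ge1: "1 \<le> length (word_sect w x)" for x
    using one_gen_if_word_sect_Nil[of w x] not_one by (cases "word_sect w x") auto
  show ?thesis
    using sum_length_word_sect[of w] sum_expsum_word_sect[of w]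
      E[of X1] E[of X2] E[of X3] ge1[of X1] ge1[of X2] ge1[of X3]
      length_word_sect_le[of w X1] length_word_sect_le[of w X2] length_word_sect_le[of w X3]
    by (simp add: sum_UNIV_letter split: if_splits)
qed

lemma length_word_sect_one_gen:
  "\<forall>l\<in>set w. fst l = s \<Longrightarrow> gen_perm s x \<noteq> x \<Longrightarrow> length (word_sect w x) = length w"
proof (induction w arbitrary: x)
  case (Cons l w)
  have "gen_perm s (gen_perm s x) \<noteq> gen_perm s x"
    using Cons.prems by (cases s; cases x) auto
  with Cons show ?case by (cases l; cases "snd l") auto
qed simp

lemma word_sect_double_not_one_gen:
  assumes "gen_perm s x \<noteq> x"
  shows "\<not> one_gen (word_sect ((s, b) # (s, b) # w) x)"
  using assms by (cases s; cases x; cases b) (auto simp: one_gen_def)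

theorem expsum_relator: "evalw w = id \<Longrightarrow> expsum w = 0"
proof (induction "length w" arbitrary: w rule: less_induct)
  case less
  show ?case
  proof (cases "one_gen w")
    case False
    with less show ?thesis by (blast intro: expsum_relator_not_one_gen)
  next
    case True
    then obtain s where s: "\<forall>l\<in>set w. fst l = s" unfolding one_gen_def by blast
    have "\<exists>x. gen_perm s x \<noteq> x"
      by (cases s) (auto intro: exI[of _ X1] exI[of _ X2])
    then obtain x where x: "gen_perm s x \<noteq> x" ..
    consider "w = []" | l where "w = [l]" | l m w' where "w = l # m # w'"
      by (metis list.exhaust)
    then show ?thesis
    proof cases
      case (2 l)
      with s x relator_root[OF less.prems, of x] show ?thesis by simp
    next
      case (3 l m w')
      show ?thesis
      proof (cases "m = lit_inv l")
        case True
        have "evalw (l # lit_inv l # w') = evalw w' \<circ> (letf (lit_inv l) \<circ> letf l)"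
          by (simp add: comp_assoc)
        with True 3 less.prems have "evalw w' = id" by (simp add: letf_lit_inv_left)
        moreover have "expsum w = expsum w'"
          using True 3 by (cases l) (simp add: lit_inv_def)
        ultimately show ?thesis using less.hyps 3 by simp
      next
        case False
        with s 3 obtain b where w: "w = (s, b) # (s, b) # w'"
          by (cases l; cases m) (auto simp: lit_inv_def)
        let ?w = "word_sect w x"
        have "length ?w = length w" using length_word_sect_one_gen[OF s x] .
        moreover have "\<not> one_gen ?w" using word_sect_double_not_one_gen[OF x] w by simp
        ultimately have "expsum ?w = 0"
          using expsum_relator_not_one_gen relator_word_sect[OF less.prems] less.hyps by metis
        then show ?thesis using expsum_word_sect_full \<open>length ?w = length w\<close> by simp
      qed
    qed simp
  qed
qed

corollary expsum_eq_if_evalw_eq: "evalw w1 = evalw w2 \<Longrightarrow> expsum w1 = expsum w2"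
proof -
  assume "evalw w1 = evalw w2"
  then have "evalw (w1 @ word_inv w2) = id"
    by (simp add: evalw_append evalw_word_inv_left)
  then have "expsum (w1 @ word_inv w2) = 0" by (rule expsum_relator)
  then show ?thesis by (simp add: expsum_append expsum_word_inv)
qed

definition aut_expsum :: "aut \<Rightarrow> int" where
  "aut_expsum g = expsum (SOME w. evalw w = g)"

lemma aut_expsum_evalw [simp]: "aut_expsum (evalw w) = expsum w"
proof -
  have "evalw (SOME w'. evalw w' = evalw w) = evalw w" by (rule someI) simp
  then show ?thesis unfolding aut_expsum_def by (rule expsum_eq_if_evalw_eq)
qed

lemma G3_evalw [simp]: "evalw w \<in> G3"
  unfolding G3_def by simp

lemma G3_cases [cases set: G3]:
  assumes "g \<in> G3" obtains w where "g = evalw w"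
  using assms unfolding G3_def by blast

lemma H_iff: "g \<in> H k \<longleftrightarrow> g \<in> G3 \<and> (2::int) ^ (k + 1) dvd aut_expsum g"
  unfolding H_def G3_def by (auto dest: expsum_eq_if_evalw_eq)

lemma id_in_G3 [simp]: "id \<in> G3"
  using G3_evalw[of "[]"] by simp

lemma comp_in_G3: "g \<in> G3 \<Longrightarrow> h \<in> G3 \<Longrightarrow> h \<circ> g \<in> G3"
  by (metis G3_cases G3_evalw evalw_append)

lemma inv_in_G3: "g \<in> G3 \<Longrightarrow> inv g \<in> G3"
  by (metis G3_cases G3_evalw inv_evalw)

lemma bij_G3: "g \<in> G3 \<Longrightarrow> bij g"
  by (metis G3_cases o_bij evalw_word_inv_left evalw_word_inv_right)

lemma aut_expsum_id [simp]: "aut_expsum id = 0"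
  using aut_expsum_evalw[of "[]"] by simp

lemma aut_expsum_comp: "g \<in> G3 \<Longrightarrow> h \<in> G3 \<Longrightarrow> aut_expsum (h \<circ> g) = aut_expsum g + aut_expsum h"
  by (metis G3_cases evalw_append aut_expsum_evalw expsum_append)

lemma aut_expsum_inv: "g \<in> G3 \<Longrightarrow> aut_expsum (inv g) = - aut_expsum g"
  by (metis G3_cases aut_expsum_evalw expsum_word_inv inv_evalw)

lemma id_in_H [simp]: "id \<in> H k"
  by (simp add: H_iff)

lemma comp_in_H: "g \<in> H k \<Longrightarrow> h \<in> H k \<Longrightarrow> h \<circ> g \<in> H k"
  by (simp add: H_iff comp_in_G3 aut_expsum_comp)

lemma inv_in_H: "g \<in> H k \<Longrightarrow> inv g \<in> H k"
  by (simp add: H_iff inv_in_G3 aut_expsum_inv)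

fun word_sects :: "word \<Rightarrow> vertex \<Rightarrow> word" where
  "word_sects w [] = w"
| "word_sects w (x # u) = word_sects (word_sect w x) u"

lemma evalw_append_vertex: "evalw w (u @ v) = evalw w u @ evalw (word_sects w u) v"
  by (induction u arbitrary: w) (auto simp: evalw_Cons evalw_Nil)

lemma length_evalw [simp]: "length (evalw w u) = length u"
  by (induction u arbitrary: w) (auto simp: evalw_Cons evalw_Nil)

lemma sect_evalw: "sect (evalw w) u = evalw (word_sects w u)"
  unfolding sect_def by (simp add: evalw_append_vertex fun_eq_iff)

lemma length_G3: "g \<in> G3 \<Longrightarrow> length (g u) = length u"
  by (erule G3_cases) simp

lemma G3_append: "g \<in> G3 \<Longrightarrow> g (u @ v) = g u @ sect g u v"
  by (erule G3_cases) (simp add: evalw_append_vertex sect_evalw)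

lemma sect_in_G3: "g \<in> G3 \<Longrightarrow> sect g u \<in> G3"
  by (erule G3_cases) (simp add: sect_evalw)

lemma sect_Nil [simp]: "sect g [] = g"
  by (simp add: sect_def)

lemma sect_id [simp]: "sect id u = id"
  by (simp add: sect_def fun_eq_iff)

lemma sect_sect: "sect (sect g u) v = sect g (u @ v)"
  by (simp add: sect_def add.commute)

lemma sect_comp:
  assumes g: "g \<in> G3" and h: "h \<in> G3" and fixed: "g u = u"
  shows "sect (h \<circ> g) u = sect h u \<circ> sect g u"
proof
  fix t
  have "(h \<circ> g) (u @ t) = h u @ sect h u (sect g u t)"
    using G3_append[OF g, of u t] G3_append[OF h, of u] fixed by simp
  then show "sect (h \<circ> g) u t = (sect h u \<circ> sect g u) t"
    unfolding sect_def using length_G3[OF h, of u] by simp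
qed

lemma inv_fixes: "g \<in> G3 \<Longrightarrow> g u = u \<Longrightarrow> inv g u = u"
  by (metis bij_G3 bij_is_inj inv_f_f)

lemma sect_inv:
  assumes g: "g \<in> G3" and fixed: "g u = u"
  shows "sect (inv g) u = inv (sect g u)"
proof (rule inv_equality[symmetric])
  have b: "bij g" using bij_G3[OF g] .
  have "sect (inv g) u \<circ> sect g u = sect (inv g \<circ> g) u"
    using sect_comp[OF g inv_in_G3[OF g] fixed] by simp
  also have "\<dots> = id" using b by (simp add: bij_is_inj)
  finally show "sect (inv g) u (sect g u t) = t" for t by (simp add: pointfree_idE)
  have "sect g u \<circ> sect (inv g) u = sect (g \<circ> inv g) u"
    using sect_comp[OF inv_in_G3[OF g] g inv_fixes[OF g fixed]] by simp
  also have "\<dots> = id" using b by (metis bij_is_surj surj_iff sect_id)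
  finally show "sect g u (sect (inv g) u t) = t" for t by (simp add: pointfree_idE)
qed

lemma sum_aut_expsum_sect:
  "g \<in> G3 \<Longrightarrow> (\<Sum>x\<in>UNIV. aut_expsum (sect g [x])) = 2 * aut_expsum g"
  by (erule G3_cases) (simp add: sect_evalw sum_expsum_word_sect)

lemma aut_expsum_eq_0_if_level_sects:
  "g \<in> G3 \<Longrightarrow> (\<And>v. length v = k \<Longrightarrow> aut_expsum (sect g v) = 0) \<Longrightarrow> aut_expsum g = 0"
proof (induction k arbitrary: g)
  case 0
  then show ?case by (metis length_0_conv sect_Nil)
next
  case (Suc k)
  have "aut_expsum (sect g [x]) = 0" for x
    using Suc.IH[of "sect g [x]"] Suc.prems sect_in_G3 by (simp add: sect_sect)
  then show ?case using sum_aut_expsum_sect[OF Suc.prems(1)] by simp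
qed

lemma aut_expsum_sect_concentrated:
  assumes "g \<in> G3" "length u = k"
    and "\<And>v. length v = k \<Longrightarrow> v \<noteq> u \<Longrightarrow> aut_expsum (sect g v) = 0"
  shows "aut_expsum (sect g u) = 2 ^ k * aut_expsum g"
  using assms
proof (induction u arbitrary: g k)
  case (Cons x u)
  then obtain k' where k: "k = Suc k'" "length u = k'" by auto
  have "aut_expsum (sect g [y]) = 0" if "y \<noteq> x" for y
    using aut_expsum_eq_0_if_level_sects[of "sect g [y]" k'] Cons.prems that k
    by (simp add: sect_in_G3 sect_sect)
  then have "aut_expsum (sect g [x]) = 2 * aut_expsum g"
    using sum_aut_expsum_sect[OF Cons.prems(1)] by (cases x) (auto simp: sum_UNIV_letter)
  moreover have "aut_expsum (sect (sect g [x]) u) = 2 ^ k' * aut_expsum (sect g [x])"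
    using Cons.IH[of "sect g [x]" k'] Cons.prems k by (simp add: sect_in_G3 sect_sect)
  ultimately show ?case using k by (simp add: sect_sect)
qed simp

definition letter_triple :: "(letter \<Rightarrow> letter) \<Rightarrow> letter \<times> letter \<times> letter" where
  "letter_triple f = (f X1, f X2, f X3)"

text \<open>Each generator acts on the first level as a transposition.\<close>
lemma letter_triple_word_root:
  "letter_triple (word_root w) \<in> (if even (length w)
     then {(X1,X2,X3), (X2,X3,X1), (X3,X1,X2)} else {(X2,X1,X3), (X1,X3,X2), (X3,X2,X1)})"
proof (induction w)
  case (Cons l w)
  then show ?case by (cases "fst l") (auto simp: letter_triple_def)
qed (simp add: letter_triple_def)

lemma even_aut_expsum_if_fixes_level1:
  assumes "g \<in> G3" "\<And>x. g [x] = [x]"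
  shows "even (aut_expsum g)"
proof -
  obtain w where w: "g = evalw w" using assms(1) by (cases rule: G3_cases)
  have "word_root w x = x" for x using assms(2)[of x] by (simp add: w evalw_Cons)
  then have "even (length w)"
    using letter_triple_word_root[of w] by (auto simp: letter_triple_def split: if_splits)
  moreover have "even (expsum w) \<longleftrightarrow> even (length w)"
    by (induction w rule: expsum.induct) auto
  ultimately show ?thesis by (simp add: w)
qed

definition branch :: "letter \<Rightarrow> aut \<Rightarrow> aut" where
  "branch x g = (\<lambda>u. case u of [] \<Rightarrow> [] | y # v \<Rightarrow> if y = x then x # g v else y # v)"

lemma branch_comp: "branch x (h \<circ> g) = branch x h \<circ> branch x g"
  by (auto simp: branch_def fun_eq_iff split: list.splits)

lemma branch_id: "branch x id = id"
  by (auto simp: branch_def fun_eq_iff split: list.splits)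

lemma sect_branch: "sect (branch x g) [y] = (if y = x then g else id)"
  by (simp add: sect_def branch_def fun_eq_iff)

lemma branch_fixes_outside:
  assumes "\<forall>v. \<not> (\<exists>t. v = u @ t) \<longrightarrow> g v = v"
  shows "\<forall>v. \<not> (\<exists>t. v = (x # u) @ t) \<longrightarrow> branch x g v = v"
  using assms by (auto simp: branch_def split: list.splits)

lemma aut_expsum_branch:
  assumes "g \<in> G3" "branch x g \<in> G3"
  shows "aut_expsum g = 2 * aut_expsum (branch x g)"
  using sum_aut_expsum_sect[OF assms(2)]
  by (cases x) (simp_all add: sum_UNIV_letter sect_branch)

fun free_red :: "word \<Rightarrow> word" where
  "free_red [] = []"
| "free_red (l # w) = (case free_red w of
     [] \<Rightarrow> [l]
   | m # r \<Rightarrow> (if m = lit_inv l then r else l # m # r))"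

lemma evalw_free_red: "evalw (free_red w) = evalw w"
proof (induction w)
  case (Cons l w)
  have cancel: "evalw (l # lit_inv l # r) = evalw r" for r
    by (simp add: comp_assoc letf_lit_inv_left)
  show ?case
    using Cons.IH cancel[of "tl (free_red w)"]
    by (cases "free_red w") (auto simp: fun_eq_iff)
qed simp

definition branchable :: "word \<Rightarrow> bool" where
  "branchable w \<longleftrightarrow> branch X1 (evalw w) \<in> G3"

lemma branchable_by_witness:
  assumes "word_root g X1 = X1" "word_root g X2 = X2" "word_root g X3 = X3"
    "free_red (word_sect g X1) = free_red w"
    "free_red (word_sect g X2) = []" "free_red (word_sect g X3) = []"
  shows "branchable w"
proof -
  have root: "word_root g x = x" for x using assms by (cases x) auto
  have "evalw (word_sect g x) = (if x = X1 then evalw w else id)" for x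
    using assms(4-6) evalw_free_red[of "word_sect g x"] evalw_free_red[of w]
    by (cases x) simp_all
  then have "branch X1 (evalw w) = evalw g"
    by (auto simp: fun_eq_iff branch_def evalw_Nil evalw_Cons root split: list.splits)
  then show ?thesis by (simp add: branchable_def)
qed

lemma branchable_cong: "evalw w = evalw w' \<Longrightarrow> branchable w \<longleftrightarrow> branchable w'"
  by (simp add: branchable_def)

lemma branchable_relator: "evalw w = id \<Longrightarrow> branchable w"
  by (simp add: branchable_def branch_id)

lemma branchable_append: "branchable w1 \<Longrightarrow> branchable w2 \<Longrightarrow> branchable (w1 @ w2)"
  by (simp add: branchable_def evalw_append branch_comp comp_in_G3)

lemma branchable_word_inv: "branchable w \<Longrightarrow> branchable (word_inv w)"
proof -
  assume "branchable w"
  moreover have "inv (branch X1 (evalw w)) = branch X1 (evalw (word_inv w))"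
    by (rule inv_equality; simp add: pointfree_idE branch_comp[symmetric] branch_id
        evalw_word_inv_left evalw_word_inv_right flip: comp_apply[of "branch X1 _"])
  ultimately show ?thesis
    unfolding branchable_def by (metis inv_in_G3)
qed

text \<open>Schreier generators a^r s^{\<plusminus>1} a^-r' (with transversal 1, a, a^2, a^3) of the subgroup of
  elements with exponent sum divisible by 4. After free reduction each one is trivial, one of the
  nine words below, or the inverse of one of them; each of these is realised below vertex 1 by an
  explicit element of G3 with trivial root permutation and sections (that word, e, e).\<close>
lemma branchable_schreier_0: "branchable [(Gb, False), (Ga, True)]"
  by (rule branchable_by_witness[where g=
        "[(Gb, True), (Gc, True), (Gb, False), (Gc, False), (Gb, False), (Gc, True)]"])
    (simp_all add: lit_inv_def)

lemma branchable_schreier_1: "branchable [(Ga, False), (Gb, False), (Ga, True), (Ga, True)]"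
  by (rule branchable_by_witness[where g=
        "[(Ga, False), (Gc, False), (Gb, False), (Gc, True), (Gb, True), (Gc, True),
          (Gb, False), (Ga, True)]"])
    (simp_all add: lit_inv_def)

lemma branchable_schreier_2: "branchable
    [(Ga, False), (Ga, False), (Gb, False), (Ga, True), (Ga, True), (Ga, True)]"
  by (rule branchable_by_witness[where g=
        "[(Ga, False), (Gb, True), (Gc, False), (Ga, False), (Gc, True), (Gb, False),
          (Ga, True), (Gc, False), (Gc, True), (Ga, False), (Gc, True), (Ga, True),
          (Gc, False), (Ga, True), (Ga, False), (Gc, False), (Gb, False), (Gc, True),
          (Gb, True), (Gc, True), (Gb, False), (Ga, True)]"])
    (simp_all add: lit_inv_def)

lemma branchable_schreier_3: "branchable [(Gc, False), (Ga, True)]"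
  by (rule branchable_by_witness[where g=
        "[(Ga, True), (Gb, False), (Ga, False), (Gb, False), (Ga, True), (Gb, True)]"])
    (simp_all add: lit_inv_def)

lemma branchable_schreier_4: "branchable [(Ga, False), (Gc, False), (Ga, True), (Ga, True)]"
  by (rule branchable_by_witness[where g=
        "[(Gc, False), (Gb, False), (Ga, True), (Gb, True), (Ga, True), (Gb, False),
          (Ga, False), (Gc, True)]"])
    (simp_all add: lit_inv_def)

lemma branchable_schreier_5: "branchable
    [(Ga, False), (Ga, False), (Gc, False), (Ga, True), (Ga, True), (Ga, True)]"
  by (rule branchable_by_witness[where g=
        "[(Ga, False), (Gb, True), (Gc, False), (Gb, False), (Gc, False), (Gb, True),
          (Gc, True), (Ga, True), (Ga, False), (Gb, False), (Ga, False), (Gb, False),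
          (Ga, True), (Gb, True), (Ga, True), (Ga, True), (Ga, False), (Gc, False),
          (Gb, False), (Gc, True), (Gb, True), (Gc, True), (Gb, False), (Ga, True)]"])
    (simp_all add: lit_inv_def)

lemma branchable_schreier_6: "branchable [(Ga, False), (Ga, False), (Ga, False), (Gb, False)]"
  by (rule branchable_by_witness[where g=
        "[(Gc, False), (Ga, True), (Gb, True), (Ga, False), (Gb, False), (Ga, False),
          (Gb, True), (Gc, True), (Gc, False), (Ga, True), (Gc, False), (Ga, False),
          (Gc, True), (Ga, False)]"])
    (simp_all add: lit_inv_def)

lemma branchable_schreier_7: "branchable [(Ga, False), (Ga, False), (Ga, False), (Gc, False)]"
  by (rule branchable_by_witness[where g=
        "[(Ga, False), (Gb, True), (Gc, False), (Gb, False), (Gc, False), (Gb, True),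
          (Gc, True), (Ga, True), (Ga, False), (Gc, True), (Ga, False), (Gc, False),
          (Ga, True), (Gc, False)]"])
    (simp_all add: lit_inv_def)

lemma branchable_schreier_8: "branchable [(Ga, False), (Ga, False), (Ga, False), (Ga, False)]"
  by (rule branchable_by_witness[where g=
        "[(Ga, False), (Gb, True), (Gc, False), (Gb, False), (Gc, False), (Gb, True),
          (Gc, True), (Ga, True), (Ga, False), (Gc, True), (Ga, False), (Gc, False),
          (Ga, True), (Gc, False), (Gc, True), (Ga, True), (Gb, True), (Ga, False),
          (Gb, False), (Ga, False), (Gb, True), (Gc, False)]"])
    (simp_all add: lit_inv_def)

lemmas branchable_schreier =
  branchable_schreier_0 branchable_schreier_1 branchable_schreier_2 branchable_schreier_3
  branchable_schreier_4 branchable_schreier_5 branchable_schreier_6 branchable_schreier_7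
  branchable_schreier_8

lemmas branchable_schreier_inv =
  branchable_schreier[THEN branchable_word_inv, unfolded word_inv_def lit_inv_def, simplified]

lemma branchable_schreier_literal:
  assumes "r < 4"
  shows "branchable (replicate r (Ga, False) @ [l]
           @ word_inv (replicate (nat ((int r + expsum [l]) mod 4)) (Ga, False)))"
    (is "branchable ?w")
proof -
  obtain s b where l: "l = (s, b)" by (cases l)
  have "r = 0 \<or> r = 1 \<or> r = 2 \<or> r = 3" using assms by arith
  then have "branchable (free_red ?w)"
    unfolding l
    by (elim disjE; cases s; cases b)
      (simp_all add: lit_inv_def word_inv_def numeral_2_eq_2 numeral_3_eq_3
        branchable_relator branchable_schreier branchable_schreier_inv)
  then show ?thesis using branchable_cong evalw_free_red by blast
qed

lemma evalw_cancel_middle: "evalw (p @ word_inv v @ v @ q) = evalw (p @ q)"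
proof -
  have "evalw (p @ word_inv v @ v @ q) = evalw q \<circ> (evalw v \<circ> evalw (word_inv v)) \<circ> evalw p"
    by (simp add: evalw_append comp_assoc)
  then show ?thesis by (simp add: evalw_word_inv_right evalw_append)
qed

text \<open>Schreier rewriting: a^r w a^-r' is the product of the Schreier generators met along w.\<close>
lemma branchable_schreier_word:
  "r < 4 \<Longrightarrow> branchable (replicate r (Ga, False) @ w
     @ word_inv (replicate (nat ((int r + expsum w) mod 4)) (Ga, False)))"
proof (induction w arbitrary: r)
  case Nil
  then have "nat (int r mod 4) = r" by simp
  then show ?case by (simp add: branchable_relator evalw_append evalw_word_inv_left)
next
  case (Cons l w)
  let ?A = "\<lambda>n. replicate n (Ga, False)"
  define r' where "r' = nat ((int r + expsum [l]) mod 4)"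
  define r'' where "r'' = nat ((int r + expsum (l # w)) mod 4)"
  have "nat ((int r' + expsum w) mod 4) = r''"
    unfolding r'_def r''_def expsum_Cons[of l w] by (simp add: mod_add_left_eq add.assoc)
  then have "branchable (?A r' @ w @ word_inv (?A r''))"
    using Cons.IH[of r'] by (simp add: r'_def)
  with branchable_schreier_literal[OF Cons.prems, of l]
  have "branchable ((?A r @ [l]) @ word_inv (?A r') @ ?A r' @ (w @ word_inv (?A r'')))"
    unfolding r'_def using branchable_append by fastforce
  moreover have "evalw ((?A r @ [l]) @ word_inv (?A r') @ ?A r' @ (w @ word_inv (?A r'')))
      = evalw (?A r @ (l # w) @ word_inv (?A r''))"
    using evalw_cancel_middle[of "?A r @ [l]" "?A r'" "w @ word_inv (?A r'')"] by simp
  ultimately show ?case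
    unfolding r''_def[symmetric] using branchable_cong by blast
qed

lemma branch_X1_in_G3: "g \<in> G3 \<Longrightarrow> 4 dvd aut_expsum g \<Longrightarrow> branch X1 g \<in> G3"
proof (erule G3_cases)
  fix w assume "g = evalw w" "4 dvd aut_expsum g"
  then show ?thesis
    using branchable_schreier_word[of 0 w] by (simp add: branchable_def word_inv_def)
qed

text \<open>Conjugating by a (resp. c) moves the subtree at 1 to the one at 2 (resp. 3); both have
  section a at 1, hence the common conjugate.\<close>
lemma branch_X2: "branch X2 g = aa \<circ> branch X1 (ainv \<circ> g \<circ> aa) \<circ> ainv"
proof
  fix u show "branch X2 g u = (aa \<circ> branch X1 (ainv \<circ> g \<circ> aa) \<circ> ainv) u"
    by (cases u; cases "hd u") (auto simp: branch_def gen_inv_left gen_inv_right neq_Nil_conv)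
qed

lemma branch_X3: "branch X3 g = cc \<circ> branch X1 (ainv \<circ> g \<circ> aa) \<circ> cinv"
proof
  fix u show "branch X3 g u = (cc \<circ> branch X1 (ainv \<circ> g \<circ> aa) \<circ> cinv) u"
    by (cases u; cases "hd u") (auto simp: branch_def gen_inv_left gen_inv_right neq_Nil_conv)
qed

lemma branch_in_G3:
  assumes g: "g \<in> G3" and d: "4 dvd aut_expsum g"
  shows "branch x g \<in> G3"
proof -
  obtain w where w: "g = evalw w" using g by (rule G3_cases)
  have conj: "ainv \<circ> g \<circ> aa = evalw ([(Ga, False)] @ w @ [(Ga, True)])"
    by (simp add: w evalw_append inv_aa comp_assoc)
  have "4 dvd aut_expsum (evalw ([(Ga, False)] @ w @ [(Ga, True)]))"
    using d by (simp only: aut_expsum_evalw) (simp add: w expsum_append)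
  then have "branch X1 (ainv \<circ> g \<circ> aa) \<in> G3"
    unfolding conj by (intro branch_X1_in_G3 G3_evalw)
  moreover have "aa \<in> G3" "ainv \<in> G3" "cc \<in> G3" "cinv \<in> G3"
    using G3_evalw[of "[(Ga, False)]"] G3_evalw[of "[(Ga, True)]"]
      G3_evalw[of "[(Gc, False)]"] G3_evalw[of "[(Gc, True)]"]
    by (simp_all add: inv_aa inv_cc)
  ultimately show ?thesis
    using branch_X1_in_G3[OF g d] by (cases x) (simp_all add: branch_X2 branch_X3 comp_in_G3)
qed

lemma not_prefix_same_length: "length v = length u \<Longrightarrow> v \<noteq> u \<Longrightarrow> \<not> (\<exists>w. v @ t = u @ w)"
  by (metis append_eq_append_conv)

lemma Rist_v_fixes: "g \<in> Rist_v u \<Longrightarrow> g u = u"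
proof (rule ccontr)
  assume g: "g \<in> Rist_v u" and moved: "g u \<noteq> u"
  then have G: "g \<in> G3" by (simp add: Rist_v_def)
  have "\<not> (\<exists>w. g u = u @ w)"
    using not_prefix_same_length[of "g u" u "[]"] length_G3[OF G] moved by simp
  then have "g (g u) = g u" using g by (simp add: Rist_v_def)
  then show False using moved bij_G3[OF G] by (simp add: bij_is_inj inj_eq)
qed

lemma Rist_v_sect_other:
  assumes g: "g \<in> Rist_v u" and "length v = length u" "v \<noteq> u"
  shows "sect g v = id"
proof
  fix t
  have "\<not> (\<exists>w. v @ t = u @ w)" using not_prefix_same_length assms(2,3) .
  then show "sect g v t = id t" using g by (simp add: Rist_v_def sect_def)
qed

lemma Rist_v_subset_St:
  assumes u: "u \<in> level k"
  shows "Rist_v u \<subseteq> St k"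
proof (rule subsetI)
  fix g assume g: "g \<in> Rist_v u"
  have "g v = v" if v: "v \<in> level k" for v
  proof (cases "v = u")
    case True
    then show ?thesis using Rist_v_fixes[OF g] by simp
  next
    case False
    then have "\<not> (\<exists>w. v = u @ w)"
      using not_prefix_same_length[of v u "[]"] u v by (simp add: level_def)
    then show ?thesis using g by (simp add: Rist_v_def)
  qed
  then show "g \<in> St k" using g by (simp add: St_def Rist_v_def)
qed

lemma St_fixes_level1: "g \<in> St k \<Longrightarrow> 1 \<le> k \<Longrightarrow> g [x] = [x]"
proof -
  assume g: "g \<in> St k" and k: "1 \<le> k"
  then have "g ([x] @ replicate (k - 1) X1) = [x] @ replicate (k - 1) X1"
    by (simp add: St_def level_def)
  moreover have "length (g [x]) = 1" using g length_G3 by (simp add: St_def)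
  moreover have "g ([x] @ replicate (k - 1) X1) = g [x] @ sect g [x] (replicate (k - 1) X1)"
    using g G3_append by (simp add: St_def)
  ultimately show ?thesis by (cases "g [x]") auto
qed

text \<open>The sections of an element of Rist(u) at the other vertices of level k are trivial, so its
  section at u carries 2^k times its exponent sum, which is even since it fixes the first level.\<close>
lemma sect_Rist_v_in_H:
  assumes g: "g \<in> Rist_v u" and u: "u \<in> level k" and k: "1 \<le> k"
  shows "sect g u \<in> H k"
proof -
  have G: "g \<in> G3" using g by (simp add: Rist_v_def)
  have "aut_expsum (sect g u) = 2 ^ k * aut_expsum g"
    using u Rist_v_sect_other[OF g] by (intro aut_expsum_sect_concentrated[OF G]) (simp_all add: level_def)
  moreover have "even (aut_expsum g)"
    using even_aut_expsum_if_fixes_level1[OF G] St_fixes_level1 Rist_v_subset_St[OF u] g k by blast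
  ultimately show ?thesis by (simp add: H_iff sect_in_G3[OF G])
qed

lemma Rist_level_St_sects:
  assumes "g \<in> Rist_level k" "1 \<le> k"
  shows "g \<in> St k \<and> (\<forall>u\<in>level k. sect g u \<in> H k)"
  using assms(1) unfolding Rist_level_def
proof (induction rule: gen_closure.induct)
  case gc_id
  show ?case by (simp add: St_def flip: id_def)
next
  case (gc_gen g)
  then obtain u where "u \<in> level k" "g \<in> Rist_v u" by blast
  moreover have "sect g v \<in> H k" if "v \<in> level k" for v
    using sect_Rist_v_in_H[OF _ _ assms(2)] Rist_v_sect_other that calculation
    by (cases "v = u") (auto simp: level_def)
  ultimately show ?case using Rist_v_subset_St by blast
next
  case (gc_mult g h)
  then have "h \<circ> g \<in> St k \<and> (\<forall>u\<in>level k. sect (h \<circ> g) u \<in> H k)"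
    by (auto simp: St_def comp_in_G3 sect_comp comp_in_H)
  then show ?case by (simp add: comp_def)
next
  case (gc_inv g)
  then show ?case
    by (auto simp: St_def inv_in_G3 inv_fixes sect_inv inv_in_H)
qed

text \<open>Descending from the root, an element whose exponent sum is divisible by 4 can be pushed
  into a single first-level subtree, which halves the exponent sum.\<close>
lemma rigid_element_with_sect:
  assumes "h \<in> G3" "(2::int) ^ (length u + 1) dvd aut_expsum h"
  shows "\<exists>g\<in>G3. (\<forall>v. \<not> (\<exists>t. v = u @ t) \<longrightarrow> g v = v) \<and> sect g u = h
               \<and> 2 ^ length u * aut_expsum g = aut_expsum h"
  using assms(2)
proof (induction u)
  case Nil
  show ?case using assms(1) by auto
next
  case (Cons x u)
  have "(2::int) ^ (length u + 1) dvd aut_expsum h"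
    using Cons.prems by (rule dvd_trans[rotated]) (simp add: le_imp_power_dvd)
  then obtain g where g: "g \<in> G3" "\<forall>v. \<not> (\<exists>t. v = u @ t) \<longrightarrow> g v = v"
    "sect g u = h" "2 ^ length u * aut_expsum g = aut_expsum h"
    using Cons.IH by blast
  have "(2::int) ^ length u * 4 dvd 2 ^ length u * aut_expsum g"
    using Cons.prems g(4) by (simp add: power_add mult.commute mult.left_commute)
  then have "branch x g \<in> G3" by (simp add: branch_in_G3[OF g(1)])
  moreover have "sect (branch x g) (x # u) = h"
    using sect_sect[of "branch x g" "[x]" u] g(3) by (simp add: sect_branch)
  moreover have "2 ^ length (x # u) * aut_expsum (branch x g) = aut_expsum h"
    using aut_expsum_branch[OF g(1) calculation(1)] g(4) by simp
  ultimately show ?case using branch_fixes_outside[OF g(2)] by blast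
qed

lemma Rist_v_with_sect: "u \<in> level k \<Longrightarrow> h \<in> H k \<Longrightarrow> \<exists>g\<in>Rist_v u. sect g u = h"
  using rigid_element_with_sect[of h u] by (auto simp: H_iff level_def Rist_v_def)

lemma finite_level: "finite (level k)"
  using finite_lists_length_eq[of "UNIV :: letter set" k] by (simp add: level_def)

lemma Rist_level_realizes:
  assumes k: "1 \<le> k" and f: "f \<in> PiE (level k) (\<lambda>_. H k)"
    and "finite A" "A \<subseteq> level k"
  shows "\<exists>g\<in>Rist_level k. \<forall>u\<in>level k. sect g u = (if u \<in> A then f u else id)"
  using assms(3,4)
proof (induction A rule: finite_induct)
  case empty
  have "id \<in> Rist_level k" unfolding Rist_level_def by (rule gc_id)
  then show ?case by (force simp flip: id_def)
next
  case (insert u A)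
  then obtain g where g: "g \<in> Rist_level k" "\<forall>v\<in>level k. sect g v = (if v \<in> A then f v else id)"
    by auto
  have u: "u \<in> level k" using insert.prems by simp
  obtain gu where gu: "gu \<in> Rist_v u" "sect gu u = f u"
    using Rist_v_with_sect[OF u] f u by blast
  have "gu \<circ> g \<in> Rist_level k"
    unfolding Rist_level_def
    using g(1) gu(1) u by (auto simp: Rist_level_def intro: gc_mult gc_gen)
  moreover have "sect (gu \<circ> g) v = (if v \<in> insert u A then f v else id)" if v: "v \<in> level k" for v
  proof -
    have gG: "g \<in> St k" using Rist_level_St_sects[OF g(1) k] by blast
    then have "sect (gu \<circ> g) v = sect gu v \<circ> sect g v"
      using sect_comp gu(1) v by (simp add: St_def Rist_v_def)
    then show ?thesis
      using Rist_v_sect_other[OF gu(1)] gu(2) g(2) v u insert.hyps(2)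
      by (cases "v = u") (auto simp: level_def)
  qed
  ultimately show ?case by blast
qed

lemma psi_Rist_level: "1 \<le> k \<Longrightarrow> psi k ` Rist_level k = PiE (level k) (\<lambda>_. H k)"
proof
  assume k: "1 \<le> k"
  then show "psi k ` Rist_level k \<subseteq> PiE (level k) (\<lambda>_. H k)"
    using Rist_level_St_sects by (auto simp: psi_def restrict_PiE_iff)
  show "PiE (level k) (\<lambda>_. H k) \<subseteq> psi k ` Rist_level k"
  proof
    fix f assume f: "f \<in> PiE (level k) (\<lambda>_. H k)"
    then obtain g where "g \<in> Rist_level k" "\<forall>u\<in>level k. sect g u = f u"
      using Rist_level_realizes[OF k f finite_level[of k] subset_refl] by auto
    moreover from this(2) have "psi k g = f"
      using PiE_restrict[OF f] unfolding psi_def by (metis restrict_ext)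
    ultimately show "f \<in> psi k ` Rist_level k" by blast
  qed
qed

lemma psi_Rist_v:
  assumes k: "1 \<le> k" and u: "u \<in> level k"
  shows "psi k ` Rist_v u = {f \<in> PiE (level k) (\<lambda>_. H k \<union> {id}).
           f u \<in> H k \<and> (\<forall>v \<in> level k. v \<noteq> u \<longrightarrow> f v = id)}" (is "_ = ?R")
proof
  show "psi k ` Rist_v u \<subseteq> ?R"
  proof
    fix f assume "f \<in> psi k ` Rist_v u"
    then obtain g where g: "g \<in> Rist_v u" and f: "f = psi k g" by blast
    have "sect g v = id" if "v \<in> level k" "v \<noteq> u" for v
      using Rist_v_sect_other[OF g] that u by (simp add: level_def)
    with sect_Rist_v_in_H[OF g u k] u show "f \<in> ?R" by (auto simp: f psi_def)
  qed
  show "?R \<subseteq> psi k ` Rist_v u"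
  proof
    fix f assume f: "f \<in> ?R"
    then obtain g where g: "g \<in> Rist_v u" "sect g u = f u"
      using Rist_v_with_sect[OF u] by blast
    have "sect g v = f v" if "v \<in> level k" for v
      using that f g Rist_v_sect_other[OF g(1)] u by (cases "v = u") (auto simp: level_def)
    then have "psi k g = f"
      using PiE_restrict[of f] f unfolding psi_def by (metis (no_types, lifting) mem_Collect_eq restrict_ext)
    then show "f \<in> psi k ` Rist_v u" using g(1) by blast
  qed
qed

theorem theorem5p5:
  fixes k :: nat
  assumes "k \<ge> 1"
  shows "Rist_level k \<subseteq> St k
       \<and> psi k ` Rist_level k = PiE (level k) (\<lambda>_. H k)
       \<and> psi k ` Rist_v (replicate k X1) =
           {f \<in> PiE (level k) (\<lambda>_. H k \<union> {id}).
              f (replicate k X1) \<in> H k \<and>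
              (\<forall>u \<in> level k. u \<noteq> replicate k X1 \<longrightarrow> f u = id)}"
proof (intro conjI)
  show "Rist_level k \<subseteq> St k" using Rist_level_St_sects assms by blast
  show "psi k ` Rist_level k = PiE (level k) (\<lambda>_. H k)" using psi_Rist_level assms .
  show "psi k ` Rist_v (replicate k X1) = {f \<in> PiE (level k) (\<lambda>_. H k \<union> {id}).
      f (replicate k X1) \<in> H k \<and> (\<forall>u \<in> level k. u \<noteq> replicate k X1 \<longrightarrow> f u = id)}"
    using assms by (intro psi_Rist_v) (simp_all add: level_def)
qed

end
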